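(* Let $J_1,J_2\subseteq I$ be ideals in a Noetherian ring $R$ such that both pairs $J_1\subseteq I$ and $J_2\subseteq I$ are Aluffi torsion-free. Then $J_1+J_2\subseteq I$ is Aluffi torsion-free if and only if the pair of image ideals $\overline{J_1}\subseteq\overline I$ in $\overline R=R/J_2$ is Aluffi torsion-free.
   Context: A pair of ideals $J\subseteq I$ in a ring $R$ is called Aluffi torsion-free if $J\cap I^n=JI^{n-1}$ for all $n\ge1$ (with $I^0=R$). *)

theory Defs
  imports "HOL-Algebra.Algebra" "HOL-Algebra.Ideal_Product"
begin

fun ideal_pow :: "('a, 'b) ring_scheme \<Rightarrow> 'a set \<Rightarrow> nat \<Rightarrow> 'a set" where
  "ideal_pow R I 0 = carrier R"
| "ideal_pow R I (Suc n) = ideal_prod R I (ideal_pow R I n)"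

definition aluffi_torsion_free :: "('a, 'b) ring_scheme \<Rightarrow> 'a set \<Rightarrow> 'a set \<Rightarrow> bool" where
  "aluffi_torsion_free R J I \<longleftrightarrow>
     (\<forall>n::nat. n \<ge> 1 \<longrightarrow> J \<inter> ideal_pow R I n = ideal_prod R J (ideal_pow R I (n - 1)))"

definition quot_image :: "('a, 'b) ring_scheme \<Rightarrow> 'a set \<Rightarrow> 'a set \<Rightarrow> 'a set set" where
  "quot_image R K A = (\<lambda>a. K +>\<^bsub>R\<^esub> a) ` A"

end

theory Submission
  imports Defs
begin

(* Write J = J1 + J2, fix n \<ge> 1 and let K = I^(n-1), so that I^n = I K.  Modulo J2, the
   intersection of the images of J1 and I K is the image of J \<inter> I K, and the image of J1 K is
   that of J K = J1 K + J2 K; so torsion-freeness of the images says that J \<inter> I K and J K agree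
   modulo J2.  Since J K \<subseteq> J \<inter> I K, and torsion-freeness of J2 \<subseteq> I gives
   (J \<inter> I K) \<inter> J2 = J2 K \<subseteq> J K, the modular law turns agreement modulo J2 into equality. *)

no_notation Sum_Type.Plus (infixr \<open><+>\<close> 65)

lemma (in abelian_group) mem_set_add_iff:
  "x \<in> A <+> B \<longleftrightarrow> (\<exists>a\<in>A. \<exists>b\<in>B. x = a \<oplus> b)"
  unfolding set_add_def' by blast

lemma (in abelian_subgroup) a_rcos_vimage_image:
  assumes "A \<subseteq> carrier G"
  shows "carrier G \<inter> (+>) H -` ((+>) H ` A) = A <+> H"
proof (intro equalityI subsetI)
  fix x assume "x \<in> carrier G \<inter> (+>) H -` ((+>) H ` A)"
  then obtain a where x: "x \<in> carrier G" and a: "a \<in> A" "H +> a = H +> x" by force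
  have "x \<in> H +> a" using a_repr_independenceD[OF x a(2)] .
  then obtain h where h: "h \<in> H" "x = h \<oplus> a" unfolding a_r_coset_def' by blast
  have "x = a \<oplus> h" using h a assms a_comm[of h a] a_Hcarr[OF h(1)] by blast
  then show "x \<in> A <+> H" using a(1) h(1) mem_set_add_iff by blast
next
  fix x assume "x \<in> A <+> H"
  then obtain a h where ah: "a \<in> A" "h \<in> H" "x = a \<oplus> h" using mem_set_add_iff by blast
  with assms have a: "a \<in> carrier G" by blast
  have "x = h \<oplus> a" using ah a a_comm[of a h] a_Hcarr[OF ah(2)] by blast
  then have x: "x \<in> H +> a" using ah(2) unfolding a_r_coset_def' by blast
  have "x \<in> carrier G" using a_elemrcos_carrier[OF a x] .
  moreover have "H +> x = H +> a" using a_repr_independence'[OF x a] by (rule sym)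
  ultimately show "x \<in> carrier G \<inter> (+>) H -` ((+>) H ` A)" using ah(1) by blast
qed

lemma (in abelian_subgroup) a_rcos_image_eq_iff:
  assumes "A \<subseteq> carrier G" "B \<subseteq> carrier G"
  shows "(+>) H ` A = (+>) H ` B \<longleftrightarrow> A <+> H = B <+> H"
proof
  assume eq: "(+>) H ` A = (+>) H ` B"
  have "A <+> H = carrier G \<inter> (+>) H -` ((+>) H ` A)"
    using a_rcos_vimage_image[OF assms(1)] by (rule sym)
  also have "\<dots> = B <+> H"
    unfolding eq using assms(2) by (rule a_rcos_vimage_image)
  finally show "A <+> H = B <+> H" .
next
  have image_vimage: "(+>) H ` C = (+>) H ` (C <+> H)" if "C \<subseteq> carrier G" for C
  proof -
    have "(+>) H ` C = (+>) H ` (carrier G \<inter> (+>) H -` ((+>) H ` C))"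
      using that by blast
    then show ?thesis using a_rcos_vimage_image[OF that] by simp
  qed
  assume "A <+> H = B <+> H"
  then show "(+>) H ` A = (+>) H ` B"
    using image_vimage[OF assms(1)] image_vimage[OF assms(2)] by simp
qed

lemma (in abelian_subgroup) a_rcos_image_Int:
  assumes "A \<subseteq> carrier G" "B \<subseteq> carrier G"
  shows "(+>) H ` A \<inter> (+>) H ` B = (+>) H ` ((A <+> H) \<inter> B)"
proof -
  have "(+>) H ` A \<inter> (+>) H ` B = (+>) H ` (B \<inter> (carrier G \<inter> (+>) H -` ((+>) H ` A)))"
    using assms(2) by blast
  then show ?thesis using a_rcos_vimage_image[OF assms(1)] by (simp add: Int_commute)
qed

lemma (in abelian_subgroup) a_rcos_image_set_add:
  assumes "A \<subseteq> carrier G" "B \<subseteq> H" "\<zero> \<in> B"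
  shows "(+>) H ` (A <+> B) = (+>) H ` A"
proof -
  have absorb: "H +> (a \<oplus> b) = H +> a" if a: "a \<in> carrier G" and b: "b \<in> H" for a b
  proof -
    have "a \<oplus> b = b \<oplus> a" using a_comm[OF a a_Hcarr[OF b]] .
    then have "a \<oplus> b \<in> H +> a" using b unfolding a_r_coset_def' by blast
    then show ?thesis using a_repr_independence' a by (metis sym)
  qed
  show ?thesis
  proof (intro equalityI subsetI)
    fix y assume "y \<in> (+>) H ` (A <+> B)"
    then obtain x where "x \<in> A <+> B" "y = H +> x" by blast
    then obtain a b where "a \<in> A" "b \<in> B" "y = H +> (a \<oplus> b)"
      unfolding mem_set_add_iff by blast
    then show "y \<in> (+>) H ` A" using absorb assms(1,2) by (metis image_eqI subsetD)
  next
    fix y assume "y \<in> (+>) H ` A"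
    then obtain a where a: "a \<in> A" "y = H +> a" by blast
    have "a \<oplus> \<zero> \<in> A <+> B" unfolding mem_set_add_iff using a(1) assms(3) by blast
    moreover have "H +> (a \<oplus> \<zero>) = y" using absorb a assms by blast
    ultimately show "y \<in> (+>) H ` (A <+> B)" by blast
  qed
qed

lemma (in abelian_group) additive_subgroups_eq_modular:
  assumes "additive_subgroup H G" "additive_subgroup A G" "additive_subgroup B G"
    and "B \<subseteq> A" "A \<inter> H \<subseteq> B" "A <+> H \<subseteq> B <+> H"
  shows "A = B"
proof
  interpret H: additive_subgroup H G by fact
  interpret A: additive_subgroup A G by fact
  interpret B: additive_subgroup B G by fact
  show "A \<subseteq> B"
  proof
    fix a assume a: "a \<in> A"
    have "a \<in> A <+> H"
      unfolding set_add_def' using A.a_Hcarr[OF a]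
      by (intro UN_I[OF a] UN_I[OF H.zero_closed]) simp
    then obtain b h where bh: "b \<in> B" "h \<in> H" "a = b \<oplus> h"
      using assms(6) unfolding set_add_def' by blast
    then have "h = \<ominus> b \<oplus> a"
      using B.a_Hcarr[OF bh(1)] H.a_Hcarr[OF bh(2)] by (simp add: a_assoc[symmetric] l_neg)
    then have "h \<in> A" using bh(1) a assms(4) by blast
    then have "h \<in> B" using bh(2) assms(5) by blast
    then show "a \<in> B" using bh(1,3) by simp
  qed
qed (fact assms(4))

lemma ideal_prod_mono:
  assumes "A \<subseteq> A'"
  shows "A \<cdot>\<^bsub>R\<^esub> C \<subseteq> A' \<cdot>\<^bsub>R\<^esub> C"
proof
  fix x assume "x \<in> A \<cdot>\<^bsub>R\<^esub> C" then show "x \<in> A' \<cdot>\<^bsub>R\<^esub> C"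
    by (induct x rule: ideal_prod.induct) (auto intro: ideal_prod.intros simp: subsetD[OF assms])
qed

lemma (in ring) ideal_prod_subset_carrier:
  assumes "A \<subseteq> carrier R" "B \<subseteq> carrier R"
  shows "A \<cdot> B \<subseteq> carrier R"
proof
  fix x assume "x \<in> A \<cdot> B" then show "x \<in> carrier R"
    by (induct x rule: ideal_prod.induct) (use assms in auto)
qed

lemma (in ring_hom_ring) image_ideal_prod:
  assumes "A \<subseteq> carrier R" "B \<subseteq> carrier R"
  shows "h ` (A \<cdot>\<^bsub>R\<^esub> B) = (h ` A) \<cdot>\<^bsub>S\<^esub> (h ` B)"
proof (intro equalityI subsetI)
  fix y assume "y \<in> h ` (A \<cdot>\<^bsub>R\<^esub> B)"
  then obtain x where x: "x \<in> A \<cdot>\<^bsub>R\<^esub> B" "y = h x" by blast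
  have "h x \<in> (h ` A) \<cdot>\<^bsub>S\<^esub> (h ` B)"
    using x(1)
  proof (induct x rule: ideal_prod.induct)
    case (prod a b)
    then have "h a \<otimes>\<^bsub>S\<^esub> h b \<in> (h ` A) \<cdot>\<^bsub>S\<^esub> (h ` B)" by (blast intro: ideal_prod.prod)
    then show ?case using prod assms by (simp add: subsetD)
  next
    case (sum s1 s2)
    then have "h s1 \<oplus>\<^bsub>S\<^esub> h s2 \<in> (h ` A) \<cdot>\<^bsub>S\<^esub> (h ` B)" by (blast intro: ideal_prod.sum)
    then show ?case using sum R.ideal_prod_subset_carrier[OF assms] by (simp add: subsetD)
  qed
  then show "y \<in> (h ` A) \<cdot>\<^bsub>S\<^esub> (h ` B)" using x(2) by simp
next
  fix y assume "y \<in> (h ` A) \<cdot>\<^bsub>S\<^esub> (h ` B)"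
  then show "y \<in> h ` (A \<cdot>\<^bsub>R\<^esub> B)"
  proof (induct y rule: ideal_prod.induct)
    case (prod i j)
    then obtain a b where ab: "a \<in> A" "b \<in> B" "i = h a" "j = h b" by blast
    then have "h (a \<otimes> b) = i \<otimes>\<^bsub>S\<^esub> j" using assms by (simp add: subsetD)
    moreover have "a \<otimes> b \<in> A \<cdot>\<^bsub>R\<^esub> B" using ab by (blast intro: ideal_prod.prod)
    ultimately show ?case by (metis image_eqI)
  next
    case (sum s1 s2)
    then obtain x1 x2 where x: "x1 \<in> A \<cdot>\<^bsub>R\<^esub> B" "x2 \<in> A \<cdot>\<^bsub>R\<^esub> B" "s1 = h x1" "s2 = h x2"
      by blast
    then have "h (x1 \<oplus> x2) = s1 \<oplus>\<^bsub>S\<^esub> s2"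
      using R.ideal_prod_subset_carrier[OF assms] by (simp add: subsetD)
    moreover have "x1 \<oplus> x2 \<in> A \<cdot>\<^bsub>R\<^esub> B" using x by (blast intro: ideal_prod.sum)
    ultimately show ?case by (metis image_eqI)
  qed
qed

lemma (in ring) ideal_pow_is_ideal:
  assumes "ideal I R"
  shows "ideal (ideal_pow R I n) R"
  by (induct n) (simp_all add: oneideal ideal_prod_is_ideal assms)

lemma (in ring_hom_ring) image_ideal_pow:
  assumes "ideal I R" "h ` carrier R = carrier S"
  shows "h ` ideal_pow R I n = ideal_pow S (h ` I) n"
proof (induct n)
  case 0
  then show ?case using assms(2) by simp
next
  case (Suc n)
  have "I \<subseteq> carrier R" "ideal_pow R I n \<subseteq> carrier R"
    using ideal.Icarr[OF assms(1)] ideal.Icarr[OF R.ideal_pow_is_ideal[OF assms(1)]] by blast+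
  then have "h ` (I \<cdot> ideal_pow R I n) = (h ` I) \<cdot>\<^bsub>S\<^esub> (h ` ideal_pow R I n)"
    by (rule image_ideal_prod)
  then show ?case using Suc by simp
qed

lemma aluffi_torsion_free_iff:
  "aluffi_torsion_free R J I \<longleftrightarrow>
     (\<forall>m. J \<inter> I \<cdot>\<^bsub>R\<^esub> ideal_pow R I m = J \<cdot>\<^bsub>R\<^esub> ideal_pow R I m)"
proof -
  have "(\<forall>n::nat. n \<ge> 1 \<longrightarrow> P n) \<longleftrightarrow> (\<forall>m. P (Suc m))" for P
    by (metis One_nat_def Suc_le_D Suc_le_mono le0)
  then show ?thesis unfolding aluffi_torsion_free_def by simp
qed

lemma (in cring) sum_inter_ideal_prod_iff_quotient:
  assumes I: "ideal I R" and J1: "ideal J1 R" and J2: "ideal J2 R" and K: "ideal K R"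
    and "J1 \<subseteq> I" "J2 \<subseteq> I" and torsion_free: "J2 \<inter> I \<cdot> K = J2 \<cdot> K"
  shows "(J1 <+> J2) \<inter> I \<cdot> K = (J1 <+> J2) \<cdot> K \<longleftrightarrow>
         (+>) J2 ` J1 \<inter> (+>) J2 ` (I \<cdot> K) = (+>) J2 ` (J1 \<cdot> K)"
proof -
  interpret J2: ideal J2 R by fact
  define J where "J = J1 <+> J2"
  have J: "ideal J R" unfolding J_def using J1 J2 by (rule add_ideals)
  have carrier: "A \<subseteq> carrier R" if "ideal A R" for A
    using ideal.Icarr[OF that] by blast
  have "J1 \<union> J2 \<subseteq> J"
    unfolding J_def union_genideal[OF J1 J2, symmetric]
    by (rule genideal_self) (use carrier[OF J1] carrier[OF J2] in simp)
  then have J1_J: "J1 \<subseteq> J" and J2_J: "J2 \<subseteq> J" by auto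
  have J_I: "J \<subseteq> I"
    unfolding J_def union_genideal[OF J1 J2, symmetric] using I
    by (rule genideal_minimal) (use assms(5,6) in simp)
  have IK: "ideal (I \<cdot> K) R" and JK: "ideal (J \<cdot> K) R" and J1K: "ideal (J1 \<cdot> K) R"
    and J2K: "ideal (J2 \<cdot> K) R"
    using ideal_prod_is_ideal I J J1 J2 K by blast+
  have JK_sub: "J \<cdot> K \<subseteq> J \<inter> I \<cdot> K"
    using ideal_prod_inter[OF J K] ideal_prod_mono[OF J_I] by blast
  have left: "(+>) J2 ` J1 \<inter> (+>) J2 ` (I \<cdot> K) = (+>) J2 ` (J \<inter> I \<cdot> K)"
    unfolding J_def using carrier[OF J1] carrier[OF IK] by (rule J2.a_rcos_image_Int)
  have "J \<cdot> K = J1 \<cdot> K <+> J2 \<cdot> K"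
    unfolding J_def using K J1 J2 by (rule ideal_prod_distr(2))
  moreover have "J2 \<cdot> K \<subseteq> J2" using ideal_prod_inter[OF J2 K] by blast
  moreover have "\<zero> \<in> J2 \<cdot> K" using ideal.axioms(1)[OF J2K] by (rule additive_subgroup.zero_closed)
  ultimately have right: "(+>) J2 ` (J \<cdot> K) = (+>) J2 ` (J1 \<cdot> K)"
    using J2.a_rcos_image_set_add[OF carrier[OF J1K]] by simp
  have "J \<inter> I \<cdot> K = J \<cdot> K \<longleftrightarrow> (+>) J2 ` (J \<inter> I \<cdot> K) = (+>) J2 ` (J \<cdot> K)"
  proof
    assume eq: "(+>) J2 ` (J \<inter> I \<cdot> K) = (+>) J2 ` (J \<cdot> K)"
    have "J \<inter> I \<cdot> K \<subseteq> carrier R" using carrier[OF J] by blast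
    then have "(J \<inter> I \<cdot> K) <+> J2 = J \<cdot> K <+> J2"
      using J2.a_rcos_image_eq_iff[OF _ carrier[OF JK]] eq by blast
    moreover have "(J \<inter> I \<cdot> K) \<inter> J2 \<subseteq> J \<cdot> K"
      using J2_J torsion_free ideal_prod_mono[OF J2_J] by blast
    moreover have "additive_subgroup (J \<inter> I \<cdot> K) R"
      using i_intersect[OF J IK] by (rule ideal.axioms(1))
    ultimately show "J \<inter> I \<cdot> K = J \<cdot> K"
      using additive_subgroups_eq_modular J2.additive_subgroup_axioms JK_sub
        ideal.axioms(1)[OF JK] by blast
  qed simp
  then show ?thesis unfolding J_def[symmetric] left right by simp
qed

theorem proposition2p5:
  fixes R :: "('a, 'b) ring_scheme" and I J1 J2 :: "'a set"
  assumes "cring R" and "noetherian_ring R"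
    and "ideal I R" and "ideal J1 R" and "ideal J2 R"
    and "J1 \<subseteq> I" and "J2 \<subseteq> I"
    and "aluffi_torsion_free R J1 I" and "aluffi_torsion_free R J2 I"
  shows "aluffi_torsion_free R (J1 <+>\<^bsub>R\<^esub> J2) I \<longleftrightarrow>
         aluffi_torsion_free (R Quot J2) (quot_image R J2 J1) (quot_image R J2 I)"
proof -
  interpret cring R by fact
  interpret J2: ideal J2 R by fact
  interpret quotient: ring_hom_ring R "R Quot J2" "(+>\<^bsub>R\<^esub>) J2"
    by (rule J2.rcos_ring_hom_ring)
  have surj: "(+>\<^bsub>R\<^esub>) J2 ` carrier R = carrier (R Quot J2)"
    unfolding FactRing_def A_RCOSETS_def' by (simp add: UNION_singleton_eq_range)
  have pow:
    "ideal_pow (R Quot J2) ((+>\<^bsub>R\<^esub>) J2 ` I) m = (+>\<^bsub>R\<^esub>) J2 ` ideal_pow R I m" for m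
    using quotient.image_ideal_pow[OF assms(3) surj] by (rule sym)
  have prod:
    "(+>\<^bsub>R\<^esub>) J2 ` A \<cdot>\<^bsub>R Quot J2\<^esub> (+>\<^bsub>R\<^esub>) J2 ` B = (+>\<^bsub>R\<^esub>) J2 ` (A \<cdot>\<^bsub>R\<^esub> B)"
    if "ideal A R" "ideal B R" for A B
    using quotient.image_ideal_prod ideal.Icarr that by (metis subsetI)
  have torsion_free: "J2 \<inter> I \<cdot>\<^bsub>R\<^esub> ideal_pow R I m = J2 \<cdot>\<^bsub>R\<^esub> ideal_pow R I m" for m
    using assms(9) unfolding aluffi_torsion_free_iff by blast
  have step:
    "(J1 <+>\<^bsub>R\<^esub> J2) \<inter> I \<cdot>\<^bsub>R\<^esub> ideal_pow R I m = (J1 <+>\<^bsub>R\<^esub> J2) \<cdot>\<^bsub>R\<^esub> ideal_pow R I m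
     \<longleftrightarrow> (+>\<^bsub>R\<^esub>) J2 ` J1 \<inter> (+>\<^bsub>R\<^esub>) J2 ` (I \<cdot>\<^bsub>R\<^esub> ideal_pow R I m)
         = (+>\<^bsub>R\<^esub>) J2 ` (J1 \<cdot>\<^bsub>R\<^esub> ideal_pow R I m)" for m
    by (rule sum_inter_ideal_prod_iff_quotient[OF assms(3-5) ideal_pow_is_ideal[OF assms(3)]
          assms(6,7) torsion_free])
  show ?thesis
    unfolding aluffi_torsion_free_iff quot_image_def pow
    by (simp add: prod step assms ideal_pow_is_ideal)
qed

end
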